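(* (i) Every finite $\mathbf{HpsUL}^\ast$-chain is an $\mathbf{HpsUL}^\ast_\omega$-chain. (ii) Every finite $\mathbf{HpsUL}^\ast$-algebra is an $\mathbf{HpsUL}^\ast_\omega$-algebra.
   Context: An $\mathbf{HpsUL}$-algebra is a structure $\mathcal A=\langle A,\wedge,\vee,\cdot,\backslash,/,e,f,\bot,\top\rangle$ such that: - $\langle A,\wedge,\vee,\bot,\top\rangle$ is a bounded lattice; - $\langle A,\cdot,e\rangle$ is a monoid; - for all $x,y,z$: $xy\le z$ iff $x\le z/y$ iff $y\le x\backslash z$; - for all $x,y,u,v$: $\lambda_u((x\vee y)\backslash x)\vee\rho_v((x\vee y)\backslash y)=e$, where $\lambda_a(b)=(a\backslash(ba))\wedge e$ and $\rho_a(b)=((ab)/a)\wedge e$. The constant $f$ is arbitrary. An $\mathbf{HpsUL}^\ast$-algebra is one additionally satisfying weak commutativity: $xy\le e$ implies $yx\le e$. An $\mathbf{HpsUL}^\ast_\omega$-algebra is an $\mathbf{HpsUL}^\ast$-algebra satisfying $x\backslash e=x^2\backslash e$ for all $x$, where $x^2=x\cdot x$. A chain is a linearly ordered such algebra. *)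

theory Defs
  imports Main
begin

text \<open>An algebra is given by its operations on the carrier type 'a (the whole type is the
carrier).  The lattice order is defined from the meet: x \<le> y iff x \<and> y = x.\<close>

definition lat_le :: "('a \<Rightarrow> 'a \<Rightarrow> 'a) \<Rightarrow> 'a \<Rightarrow> 'a \<Rightarrow> bool" where
  "lat_le meet x y \<longleftrightarrow> meet x y = x"

definition bounded_lattice_ops ::
  "('a \<Rightarrow> 'a \<Rightarrow> 'a) \<Rightarrow> ('a \<Rightarrow> 'a \<Rightarrow> 'a) \<Rightarrow> 'a \<Rightarrow> 'a \<Rightarrow> bool" where
  "bounded_lattice_ops meet join bt tp \<longleftrightarrow>
     (\<forall>x y z. meet x (meet y z) = meet (meet x y) z) \<and>
     (\<forall>x y z. join x (join y z) = join (join x y) z) \<and>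
     (\<forall>x y. meet x y = meet y x) \<and>
     (\<forall>x y. join x y = join y x) \<and>
     (\<forall>x y. meet x (join x y) = x) \<and>
     (\<forall>x y. join x (meet x y) = x) \<and>
     (\<forall>x. meet bt x = bt) \<and>
     (\<forall>x. join tp x = tp)"

definition monoid_ops :: "('a \<Rightarrow> 'a \<Rightarrow> 'a) \<Rightarrow> 'a \<Rightarrow> bool" where
  "monoid_ops mult e \<longleftrightarrow>
     (\<forall>x y z. mult x (mult y z) = mult (mult x y) z) \<and>
     (\<forall>x. mult e x = x) \<and> (\<forall>x. mult x e = x)"

text \<open>Residuation: xy \<le> z iff x \<le> z/y iff y \<le> x\z.  ldiv x z = x\z, rdiv z y = z/y.\<close>
definition residuated_ops ::
  "('a \<Rightarrow> 'a \<Rightarrow> 'a) \<Rightarrow> ('a \<Rightarrow> 'a \<Rightarrow> 'a) \<Rightarrow> ('a \<Rightarrow> 'a \<Rightarrow> 'a) \<Rightarrow> ('a \<Rightarrow> 'a \<Rightarrow> 'a) \<Rightarrow> bool" where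
  "residuated_ops meet mult ldiv rdiv \<longleftrightarrow>
     (\<forall>x y z. (lat_le meet (mult x y) z \<longleftrightarrow> lat_le meet x (rdiv z y)) \<and>
              (lat_le meet x (rdiv z y) \<longleftrightarrow> lat_le meet y (ldiv x z)))"

definition lconj :: "('a \<Rightarrow> 'a \<Rightarrow> 'a) \<Rightarrow> ('a \<Rightarrow> 'a \<Rightarrow> 'a) \<Rightarrow> ('a \<Rightarrow> 'a \<Rightarrow> 'a) \<Rightarrow> 'a \<Rightarrow> 'a \<Rightarrow> 'a \<Rightarrow> 'a" where
  "lconj meet mult ldiv e a b = meet (ldiv a (mult b a)) e"

definition rconj :: "('a \<Rightarrow> 'a \<Rightarrow> 'a) \<Rightarrow> ('a \<Rightarrow> 'a \<Rightarrow> 'a) \<Rightarrow> ('a \<Rightarrow> 'a \<Rightarrow> 'a) \<Rightarrow> 'a \<Rightarrow> 'a \<Rightarrow> 'a \<Rightarrow> 'a" where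
  "rconj meet mult rdiv e a b = meet (rdiv (mult a b) a) e"

definition HpsUL ::
  "('a \<Rightarrow> 'a \<Rightarrow> 'a) \<Rightarrow> ('a \<Rightarrow> 'a \<Rightarrow> 'a) \<Rightarrow> ('a \<Rightarrow> 'a \<Rightarrow> 'a) \<Rightarrow> ('a \<Rightarrow> 'a \<Rightarrow> 'a)
   \<Rightarrow> ('a \<Rightarrow> 'a \<Rightarrow> 'a) \<Rightarrow> 'a \<Rightarrow> 'a \<Rightarrow> 'a \<Rightarrow> 'a \<Rightarrow> bool" where
  "HpsUL meet join mult ldiv rdiv e f bt tp \<longleftrightarrow>
     bounded_lattice_ops meet join bt tp \<and>
     monoid_ops mult e \<and>
     residuated_ops meet mult ldiv rdiv \<and>
     (\<forall>x y u v. join (lconj meet mult ldiv e u (ldiv (join x y) x))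
                     (rconj meet mult rdiv e v (ldiv (join x y) y)) = e)"

definition HpsUL_star ::
  "('a \<Rightarrow> 'a \<Rightarrow> 'a) \<Rightarrow> ('a \<Rightarrow> 'a \<Rightarrow> 'a) \<Rightarrow> ('a \<Rightarrow> 'a \<Rightarrow> 'a) \<Rightarrow> ('a \<Rightarrow> 'a \<Rightarrow> 'a)
   \<Rightarrow> ('a \<Rightarrow> 'a \<Rightarrow> 'a) \<Rightarrow> 'a \<Rightarrow> 'a \<Rightarrow> 'a \<Rightarrow> 'a \<Rightarrow> bool" where
  "HpsUL_star meet join mult ldiv rdiv e f bt tp \<longleftrightarrow>
     HpsUL meet join mult ldiv rdiv e f bt tp \<and>
     (\<forall>x y. lat_le meet (mult x y) e \<longrightarrow> lat_le meet (mult y x) e)"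

definition HpsUL_star_omega ::
  "('a \<Rightarrow> 'a \<Rightarrow> 'a) \<Rightarrow> ('a \<Rightarrow> 'a \<Rightarrow> 'a) \<Rightarrow> ('a \<Rightarrow> 'a \<Rightarrow> 'a) \<Rightarrow> ('a \<Rightarrow> 'a \<Rightarrow> 'a)
   \<Rightarrow> ('a \<Rightarrow> 'a \<Rightarrow> 'a) \<Rightarrow> 'a \<Rightarrow> 'a \<Rightarrow> 'a \<Rightarrow> 'a \<Rightarrow> bool" where
  "HpsUL_star_omega meet join mult ldiv rdiv e f bt tp \<longleftrightarrow>
     HpsUL_star meet join mult ldiv rdiv e f bt tp \<and>
     (\<forall>x. ldiv x e = ldiv (mult x x) e)"

definition is_chain :: "('a \<Rightarrow> 'a \<Rightarrow> 'a) \<Rightarrow> bool" where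
  "is_chain meet \<longleftrightarrow> (\<forall>x y. lat_le meet x y \<or> lat_le meet y x)"

end

theory Submission
  imports Defs
begin

(*
  It suffices to show that x y \<le> e iff x x y \<le> e.  A normal filter F (negative elements,
  upward closed below e, closed under products and conjugates) induces the preorder
  b \<le>_F c :<-> b f \<le> c for some f \<in> F, which is compatible with multiplication on both sides.
  If a is not below e, finiteness provides a normal filter maximal among those avoiding
  (a\e) \<and> e; it does not put a below e, and the HpsUL identity makes \<le>_F total.  This reduces
  the claim to finite monoids with a total compatible preorder, where it holds because the
  powers of any x \<ge> e stop growing: x^(N+1) \<le> x^N for some N \<ge> 1.
*)

locale totally_preordered_monoid =
  fixes rel (infix "\<preceq>" 50) and mult (infixl "\<cdot>" 70) and e :: 'a
  assumes refl: "x \<preceq> x"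
    and trans [trans]: "x \<preceq> y \<Longrightarrow> y \<preceq> z \<Longrightarrow> x \<preceq> z"
    and total: "x \<preceq> y \<or> y \<preceq> x"
    and mult_left_mono: "x \<preceq> y \<Longrightarrow> z \<cdot> x \<preceq> z \<cdot> y"
    and mult_right_mono: "x \<preceq> y \<Longrightarrow> x \<cdot> z \<preceq> y \<cdot> z"
    and assoc: "x \<cdot> (y \<cdot> z) = x \<cdot> y \<cdot> z"
    and left_unit [simp]: "e \<cdot> x = x"
    and right_unit [simp]: "x \<cdot> e = x"
begin

definition mpow :: "'a \<Rightarrow> nat \<Rightarrow> 'a" where
  "mpow x n = ((\<cdot>) x ^^ n) e"

lemma mpow_0 [simp]: "mpow x 0 = e"
  by (simp add: mpow_def)

lemma mpow_Suc: "mpow x (Suc n) = x \<cdot> mpow x n"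
  by (simp add: mpow_def)

lemma mpow_Suc_right: "mpow x (Suc n) = mpow x n \<cdot> x"
  by (induction n) (simp_all add: mpow_Suc assoc)

lemma mpow_mono:
  assumes "e \<preceq> x" and "i \<le> j"
  shows "mpow x i \<preceq> mpow x j"
  using assms(2)
proof (induction j)
  case (Suc j)
  have "mpow x j \<preceq> mpow x (Suc j)"
    using mult_right_mono[OF assms(1), of "mpow x j"] by (simp add: mpow_Suc)
  with Suc show ?case
    by (metis le_Suc_eq refl trans)
qed (simp add: refl)

lemma mpow_le_unit_right:
  assumes absorb: "mpow x N \<preceq> mpow x N \<cdot> z" and "x \<cdot> z \<preceq> e"
  shows "mpow x N \<preceq> e"
proof -
  have "mpow x N \<preceq> mpow x 0"
  proof (rule inc_induct[of 0 N])
    fix n assume "mpow x N \<preceq> mpow x (Suc n)"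
    then have "mpow x N \<cdot> z \<preceq> mpow x n \<cdot> (x \<cdot> z)"
      using mult_right_mono by (simp add: mpow_Suc_right assoc)
    also have "\<dots> \<preceq> mpow x n"
      using mult_left_mono[OF \<open>x \<cdot> z \<preceq> e\<close>] by simp
    finally show "mpow x N \<preceq> mpow x n"
      using absorb trans by blast
  qed (simp_all add: refl)
  then show ?thesis by simp
qed

lemma mpow_le_unit_left:
  assumes absorb: "mpow x N \<preceq> z \<cdot> mpow x N" and "z \<cdot> x \<preceq> e"
  shows "mpow x N \<preceq> e"
proof -
  have "mpow x N \<preceq> mpow x 0"
  proof (rule inc_induct[of 0 N])
    fix n assume "mpow x N \<preceq> mpow x (Suc n)"
    then have "z \<cdot> mpow x N \<preceq> z \<cdot> x \<cdot> mpow x n"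
      using mult_left_mono[of "mpow x N" "x \<cdot> mpow x n" z] by (simp add: mpow_Suc assoc)
    also have "\<dots> \<preceq> mpow x n"
      using mult_right_mono[OF \<open>z \<cdot> x \<preceq> e\<close>] by simp
    finally show "mpow x N \<preceq> mpow x n"
      using absorb trans by blast
  qed (simp_all add: refl)
  then show ?thesis by simp
qed

end

locale finite_totally_preordered_monoid = totally_preordered_monoid +
  assumes finite_carrier: "finite (UNIV :: 'a set)"
begin

lemma mpow_stabilises:
  assumes "e \<preceq> x"
  obtains N where "N \<ge> 1" and "mpow x (Suc N) \<preceq> mpow x N"
proof -
  have "\<not> inj (mpow x)"
    using finite_imageD[OF finite_subset[OF subset_UNIV finite_carrier]] infinite_UNIV_nat by blast
  then obtain i j where "i < j" and "mpow x i = mpow x j"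
    unfolding inj_def by (metis linorder_neq_iff)
  then have "mpow x (Suc i) \<preceq> mpow x i"
    using mpow_mono[OF assms, of "Suc i" j] by simp
  then have "mpow x (Suc (Suc i)) \<preceq> mpow x (Suc i)"
    using mult_left_mono by (simp add: mpow_Suc)
  then show ?thesis
    using that[of "Suc i"] by simp
qed

lemma mult_square_le_unit:
  assumes xz: "x \<cdot> z \<preceq> e"
  shows "x \<cdot> (x \<cdot> z) \<preceq> e"
proof -
  have case_below: "x \<cdot> (x \<cdot> z) \<preceq> e" if "x \<preceq> e"
  proof -
    have "x \<cdot> (x \<cdot> z) \<preceq> x \<cdot> z"
      using mult_right_mono[OF that, of "x \<cdot> z"] by simp
    then show ?thesis using xz by (rule trans)
  qed
  consider "x \<cdot> (x \<cdot> z) \<preceq> e" | "e \<preceq> x \<cdot> (x \<cdot> z)" "e \<preceq> x"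
    using total case_below by blast
  then show ?thesis
  proof cases
    case 2
    obtain N where "N \<ge> 1" and stable: "mpow x (Suc N) \<preceq> mpow x N"
      using mpow_stabilises[OF \<open>e \<preceq> x\<close>] .
    let ?s = "mpow x N"
    have sx: "?s \<cdot> x \<preceq> ?s"
      using stable by (simp add: mpow_Suc_right)
    have "?s \<preceq> ?s \<cdot> x \<cdot> x \<cdot> z"
      using mult_left_mono[OF \<open>e \<preceq> x \<cdot> (x \<cdot> z)\<close>, of ?s] by (simp add: assoc)
    also have "\<dots> \<preceq> ?s \<cdot> z"
      using mult_right_mono[OF trans[OF mult_right_mono[OF sx] sx]] .
    finally have "?s \<preceq> e"
      using xz by (rule mpow_le_unit_right)
    have "x \<preceq> ?s"
      using mpow_mono[OF \<open>e \<preceq> x\<close> \<open>N \<ge> 1\<close>] by (simp add: mpow_Suc)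
    then show ?thesis
      using \<open>?s \<preceq> e\<close> by (rule case_below[OF trans])
  qed
qed

lemma mult_le_unit_of_square:
  assumes xxy: "x \<cdot> (x \<cdot> y) \<preceq> e"
  shows "x \<cdot> y \<preceq> e"
proof -
  consider "x \<cdot> y \<preceq> e" | "e \<preceq> x" | "e \<preceq> x \<cdot> y" "x \<preceq> e"
    using total by blast
  then show ?thesis
  proof cases
    case 2
    have "x \<cdot> y \<preceq> x \<cdot> (x \<cdot> y)"
      using mult_right_mono[OF 2, of "x \<cdot> y"] by simp
    then show ?thesis using xxy by (rule trans)
  next
    case 3
    have "x \<cdot> y \<preceq> y"
      using mult_right_mono[OF \<open>x \<preceq> e\<close>, of y] by simp
    with \<open>e \<preceq> x \<cdot> y\<close> have "e \<preceq> y" by (rule trans)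
    then obtain N where "N \<ge> 1" and stable: "mpow y (Suc N) \<preceq> mpow y N"
      using mpow_stabilises by blast
    let ?t = "mpow y N"
    have yt: "y \<cdot> ?t \<preceq> ?t"
      using stable by (simp add: mpow_Suc)
    have "?t \<preceq> x \<cdot> (y \<cdot> ?t)"
      using mult_right_mono[OF \<open>e \<preceq> x \<cdot> y\<close>, of ?t] by (simp add: assoc)
    also have "\<dots> \<preceq> x \<cdot> ?t"
      using mult_left_mono[OF yt] .
    finally have tx: "?t \<preceq> x \<cdot> ?t" .
    also have "\<dots> \<preceq> x \<cdot> x \<cdot> ?t"
      using mult_left_mono[OF tx, of x] by (simp add: assoc)
    finally have "?t \<preceq> e"
      using mpow_le_unit_left xxy by (simp add: assoc)
    have "y \<preceq> ?t"
      using mpow_mono[OF \<open>e \<preceq> y\<close> \<open>N \<ge> 1\<close>] by (simp add: mpow_Suc)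
    then have "y \<preceq> e" using \<open>?t \<preceq> e\<close> by (rule trans)
    then have "x \<cdot> y \<preceq> x"
      using mult_left_mono[of y e x] by simp
    then show ?thesis using \<open>x \<preceq> e\<close> by (rule trans)
  qed
qed

end

locale residuated_lattice =
  fixes meet (infixl "\<sqinter>" 70) and join (infixl "\<squnion>" 65) and mult (infixl "\<cdot>" 70)
    and ldiv rdiv :: "'a \<Rightarrow> 'a \<Rightarrow> 'a" and e bt tp :: 'a
  assumes lattice_ops: "bounded_lattice_ops meet join bt tp"
    and monoid: "monoid_ops mult e"
    and residuated: "residuated_ops meet mult ldiv rdiv"
begin

abbreviation le (infix "\<sqsubseteq>" 50) where "x \<sqsubseteq> y \<equiv> lat_le meet x y"
abbreviation lam where "lam u x \<equiv> lconj meet mult ldiv e u x"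
abbreviation rho where "rho u x \<equiv> rconj meet mult rdiv e u x"

sublocale lat: lattice meet le "\<lambda>x y. x \<sqsubseteq> y \<and> \<not> y \<sqsubseteq> x" join
proof -
  have meet_assoc: "\<And>x y z. x \<sqinter> (y \<sqinter> z) = x \<sqinter> y \<sqinter> z" and meet_comm: "\<And>x y. x \<sqinter> y = y \<sqinter> x"
    and join_assoc: "\<And>x y z. x \<squnion> (y \<squnion> z) = x \<squnion> y \<squnion> z" and join_comm: "\<And>x y. x \<squnion> y = y \<squnion> x"
    and absorb_meet: "\<And>x y. x \<sqinter> (x \<squnion> y) = x" and absorb_join: "\<And>x y. x \<squnion> (x \<sqinter> y) = x"
    using lattice_ops unfolding bounded_lattice_ops_def by blast+
  have le_iff_join: "x \<sqsubseteq> y \<longleftrightarrow> x \<squnion> y = y" for x y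
    unfolding lat_le_def by (metis absorb_meet absorb_join meet_comm join_comm)
  have refl: "x \<sqsubseteq> x" for x
    unfolding lat_le_def by (metis absorb_meet absorb_join)
  have trans: "x \<sqsubseteq> z" if "x \<sqsubseteq> y" "y \<sqsubseteq> z" for x y z
    using that unfolding lat_le_def by (metis meet_assoc)
  have antisym: "x = y" if "x \<sqsubseteq> y" "y \<sqsubseteq> x" for x y
    using that unfolding lat_le_def by (metis meet_comm)
  have inf1: "x \<sqinter> y \<sqsubseteq> x" for x y
    unfolding lat_le_def by (metis meet_assoc meet_comm refl lat_le_def)
  have inf2: "x \<sqinter> y \<sqsubseteq> y" for x y
    using inf1 meet_comm by metis
  have inf_greatest: "x \<sqsubseteq> y \<sqinter> z" if "x \<sqsubseteq> y" "x \<sqsubseteq> z" for x y z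
    using that unfolding lat_le_def by (metis meet_assoc)
  have sup1: "x \<sqsubseteq> x \<squnion> y" for x y
    unfolding lat_le_def by (rule absorb_meet)
  have sup2: "y \<sqsubseteq> x \<squnion> y" for x y
    using sup1 join_comm by metis
  have sup_least: "y \<squnion> z \<sqsubseteq> x" if "y \<sqsubseteq> x" "z \<sqsubseteq> x" for x y z
    using that unfolding le_iff_join by (metis join_assoc)
  show "class.lattice meet le (\<lambda>x y. x \<sqsubseteq> y \<and> \<not> y \<sqsubseteq> x) join"
    unfolding class.lattice_def class.semilattice_inf_def class.semilattice_sup_def
      class.order_def class.preorder_def class.order_axioms_def
      class.semilattice_inf_axioms_def class.semilattice_sup_axioms_def
    using refl trans antisym inf1 inf2 inf_greatest sup1 sup2 sup_least by blast
qed

lemma assoc: "x \<cdot> (y \<cdot> z) = x \<cdot> y \<cdot> z"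
  and left_unit [simp]: "e \<cdot> x = x" and right_unit [simp]: "x \<cdot> e = x"
  using monoid unfolding monoid_ops_def by blast+

lemma le_rdiv_iff: "x \<cdot> y \<sqsubseteq> z \<longleftrightarrow> x \<sqsubseteq> rdiv z y"
  and le_ldiv_iff: "x \<cdot> y \<sqsubseteq> z \<longleftrightarrow> y \<sqsubseteq> ldiv x z"
  using residuated unfolding residuated_ops_def by blast+

lemma mult_left_mono: "x \<sqsubseteq> y \<Longrightarrow> z \<cdot> x \<sqsubseteq> z \<cdot> y"
  by (meson lat.order.trans lat.order.refl le_ldiv_iff)

lemma mult_right_mono: "x \<sqsubseteq> y \<Longrightarrow> x \<cdot> z \<sqsubseteq> y \<cdot> z"
  by (meson lat.order.trans lat.order.refl le_rdiv_iff)

lemma mult_mono: "x \<sqsubseteq> y \<Longrightarrow> z \<sqsubseteq> w \<Longrightarrow> x \<cdot> z \<sqsubseteq> y \<cdot> w"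
  by (meson lat.order.trans mult_left_mono mult_right_mono)

lemma mult_le_unit: "x \<sqsubseteq> e \<Longrightarrow> y \<sqsubseteq> e \<Longrightarrow> x \<cdot> y \<sqsubseteq> e"
  using mult_mono by fastforce

lemma mult_sup_le: "x \<cdot> (y \<squnion> z) \<sqsubseteq> x \<cdot> y \<squnion> x \<cdot> z"
  by (metis lat.le_supI lat.sup_ge1 lat.sup_ge2 le_ldiv_iff)

lemma sup_mult_le: "(y \<squnion> z) \<cdot> x \<sqsubseteq> y \<cdot> x \<squnion> z \<cdot> x"
  by (metis lat.le_supI lat.sup_ge1 lat.sup_ge2 le_rdiv_iff)

lemma ldiv_unit [simp]: "ldiv e y = y"
  by (metis lat.order.antisym lat.order.refl le_ldiv_iff left_unit)

lemma rdiv_unit [simp]: "rdiv y e = y"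
  by (metis lat.order.antisym lat.order.refl le_rdiv_iff right_unit)

lemma mult_ldiv_le: "x \<cdot> ldiv x y \<sqsubseteq> y"
  using le_ldiv_iff lat.order.refl by blast

lemma lam_le_unit: "lam u x \<sqsubseteq> e" and rho_le_unit: "rho u x \<sqsubseteq> e"
  unfolding lconj_def rconj_def by simp_all

lemma mult_lam_le: "u \<cdot> lam u x \<sqsubseteq> x \<cdot> u"
  unfolding lconj_def by (meson lat.inf_le1 le_ldiv_iff)

lemma rho_mult_le: "rho u x \<cdot> u \<sqsubseteq> u \<cdot> x"
  unfolding rconj_def by (meson lat.inf_le1 le_rdiv_iff)

lemma le_lamI: "z \<sqsubseteq> e \<Longrightarrow> u \<cdot> z \<sqsubseteq> x \<cdot> u \<Longrightarrow> z \<sqsubseteq> lam u x"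
  unfolding lconj_def by (simp add: le_ldiv_iff)

lemma le_rhoI: "z \<sqsubseteq> e \<Longrightarrow> z \<cdot> u \<sqsubseteq> u \<cdot> x \<Longrightarrow> z \<sqsubseteq> rho u x"
  unfolding rconj_def by (simp add: le_rdiv_iff)

lemma lam_mono: "x \<sqsubseteq> y \<Longrightarrow> lam u x \<sqsubseteq> lam u y"
  by (meson lam_le_unit le_lamI mult_lam_le lat.order.trans mult_right_mono)

lemma rho_mono: "x \<sqsubseteq> y \<Longrightarrow> rho u x \<sqsubseteq> rho u y"
  by (meson rho_le_unit le_rhoI rho_mult_le lat.order.trans mult_left_mono)

lemma lam_mult_le: "lam u x \<cdot> lam u y \<sqsubseteq> lam u (x \<cdot> y)"
proof (rule le_lamI)
  show "lam u x \<cdot> lam u y \<sqsubseteq> e" by (simp add: mult_le_unit lam_le_unit)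
  have "u \<cdot> (lam u x \<cdot> lam u y) \<sqsubseteq> x \<cdot> u \<cdot> lam u y"
    by (metis mult_lam_le mult_right_mono assoc)
  also have "\<dots> \<sqsubseteq> x \<cdot> y \<cdot> u"
    by (metis mult_lam_le mult_left_mono assoc)
  finally show "u \<cdot> (lam u x \<cdot> lam u y) \<sqsubseteq> x \<cdot> y \<cdot> u" .
qed

lemma rho_mult_le_rho: "rho u x \<cdot> rho u y \<sqsubseteq> rho u (x \<cdot> y)"
proof (rule le_rhoI)
  show "rho u x \<cdot> rho u y \<sqsubseteq> e" by (simp add: mult_le_unit rho_le_unit)
  have "rho u x \<cdot> rho u y \<cdot> u \<sqsubseteq> rho u x \<cdot> (u \<cdot> y)"
    by (metis rho_mult_le mult_left_mono assoc)
  also have "\<dots> \<sqsubseteq> u \<cdot> (x \<cdot> y)"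
    by (metis rho_mult_le mult_right_mono assoc)
  finally show "rho u x \<cdot> rho u y \<cdot> u \<sqsubseteq> u \<cdot> (x \<cdot> y)" .
qed

lemma lam_unit [simp]: "lam u e = e" and rho_unit [simp]: "rho u e = e"
  by (simp_all add: lat.order.antisym lam_le_unit rho_le_unit le_lamI le_rhoI)

lemma lam_by_unit [simp]: "lam e x = x \<sqinter> e" and rho_by_unit [simp]: "rho e x = x \<sqinter> e"
  unfolding lconj_def rconj_def by simp_all

inductive_set conj_closure :: "'a \<Rightarrow> 'a set" for p where
  self: "p \<in> conj_closure p"
| lam: "x \<in> conj_closure p \<Longrightarrow> lam u x \<in> conj_closure p"
| rho: "x \<in> conj_closure p \<Longrightarrow> rho u x \<in> conj_closure p"

inductive_set conj_monoid :: "'a \<Rightarrow> 'a set" for p where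
  unit: "e \<in> conj_monoid p"
| mult: "x \<in> conj_closure p \<Longrightarrow> m \<in> conj_monoid p \<Longrightarrow> x \<cdot> m \<in> conj_monoid p"

lemma conj_monoid_mult: "m \<in> conj_monoid p \<Longrightarrow> n \<in> conj_monoid p \<Longrightarrow> m \<cdot> n \<in> conj_monoid p"
  by (induction m rule: conj_monoid.induct) (auto simp flip: assoc intro: conj_monoid.mult)

lemma conj_monoid_lam: "m \<in> conj_monoid p \<Longrightarrow> \<exists>m'\<in>conj_monoid p. m' \<sqsubseteq> lam u m"
proof (induction m rule: conj_monoid.induct)
  case (mult x m)
  then obtain m' where "m' \<in> conj_monoid p" "m' \<sqsubseteq> lam u m" by blast
  then have "lam u x \<cdot> m' \<in> conj_monoid p" "lam u x \<cdot> m' \<sqsubseteq> lam u (x \<cdot> m)"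
    using mult.hyps conj_closure.lam conj_monoid.mult lam_mult_le lat.order.trans mult_left_mono
    by blast+
  then show ?case by blast
qed (use conj_monoid.unit in force)

lemma conj_monoid_rho: "m \<in> conj_monoid p \<Longrightarrow> \<exists>m'\<in>conj_monoid p. m' \<sqsubseteq> rho u m"
proof (induction m rule: conj_monoid.induct)
  case (mult x m)
  then obtain m' where "m' \<in> conj_monoid p" "m' \<sqsubseteq> rho u m" by blast
  then have "rho u x \<cdot> m' \<in> conj_monoid p" "rho u x \<cdot> m' \<sqsubseteq> rho u (x \<cdot> m)"
    using mult.hyps conj_closure.rho conj_monoid.mult rho_mult_le_rho lat.order.trans mult_left_mono
    by blast+
  then show ?case by blast
qed (use conj_monoid.unit in force)

definition normal_filter :: "'a set \<Rightarrow> bool" where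
  "normal_filter F \<longleftrightarrow> e \<in> F \<and> (\<forall>x\<in>F. x \<sqsubseteq> e)
     \<and> (\<forall>x\<in>F. \<forall>y. x \<sqsubseteq> y \<longrightarrow> y \<sqsubseteq> e \<longrightarrow> y \<in> F)
     \<and> (\<forall>x\<in>F. \<forall>y\<in>F. x \<cdot> y \<in> F) \<and> (\<forall>x\<in>F. \<forall>u. lam u x \<in> F \<and> rho u x \<in> F)"

definition adjoin_filter :: "'a set \<Rightarrow> 'a \<Rightarrow> 'a set" where
  "adjoin_filter F p = {g. g \<sqsubseteq> e \<and> (\<exists>f\<in>F. \<exists>m\<in>conj_monoid p. f \<cdot> m \<sqsubseteq> g)}"

lemma adjoin_filterI:
  "g \<sqsubseteq> e \<Longrightarrow> f \<in> F \<Longrightarrow> m \<in> conj_monoid p \<Longrightarrow> f \<cdot> m \<sqsubseteq> g \<Longrightarrow> g \<in> adjoin_filter F p"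
  unfolding adjoin_filter_def by blast

lemma adjoin_filterE:
  assumes "g \<in> adjoin_filter F p"
  obtains f m where "g \<sqsubseteq> e" "f \<in> F" "m \<in> conj_monoid p" "f \<cdot> m \<sqsubseteq> g"
  using assms unfolding adjoin_filter_def by blast

lemma subset_adjoin_filter:
  assumes "normal_filter F"
  shows "F \<subseteq> adjoin_filter F p"
proof
  fix x assume "x \<in> F"
  moreover have "x \<sqsubseteq> e"
    using assms \<open>x \<in> F\<close> unfolding normal_filter_def by blast
  ultimately show "x \<in> adjoin_filter F p"
    by (intro adjoin_filterI[where f = x and m = e]) (simp_all add: conj_monoid.unit)
qed

lemma mem_adjoin_filter:
  assumes "normal_filter F" and "p \<sqsubseteq> e"
  shows "p \<in> adjoin_filter F p"
proof (rule adjoin_filterI)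
  show "e \<in> F"
    using assms(1) unfolding normal_filter_def by blast
  show "p \<in> conj_monoid p"
    using conj_monoid.mult[OF conj_closure.self conj_monoid.unit, of p] by simp
qed (simp_all add: assms(2))

lemma normal_filter_adjoin_filter:
  assumes F: "normal_filter F"
  shows "normal_filter (adjoin_filter F p)"
proof -
  have Fe: "e \<in> F" and Fle: "\<And>x. x \<in> F \<Longrightarrow> x \<sqsubseteq> e"
    and Fmult: "\<And>x y. x \<in> F \<Longrightarrow> y \<in> F \<Longrightarrow> x \<cdot> y \<in> F"
    and Fconj: "\<And>x u. x \<in> F \<Longrightarrow> lam u x \<in> F" "\<And>x u. x \<in> F \<Longrightarrow> rho u x \<in> F"
    using F unfolding normal_filter_def by blast+
  show ?thesis unfolding normal_filter_def
  proof (intro conjI ballI allI impI)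
    show "e \<in> adjoin_filter F p"
      using Fe F subset_adjoin_filter by blast
  next
    fix x y assume "x \<in> adjoin_filter F p" "x \<sqsubseteq> y" "y \<sqsubseteq> e"
    then obtain f m where "f \<in> F" "m \<in> conj_monoid p" "f \<cdot> m \<sqsubseteq> x"
      by (elim adjoin_filterE)
    then show "y \<in> adjoin_filter F p"
      using \<open>y \<sqsubseteq> e\<close> lat.order.trans[OF \<open>f \<cdot> m \<sqsubseteq> x\<close> \<open>x \<sqsubseteq> y\<close>] by (intro adjoin_filterI)
  next
    fix x y assume "x \<in> adjoin_filter F p" "y \<in> adjoin_filter F p"
    then obtain f1 m1 f2 m2 where x: "f1 \<in> F" "m1 \<in> conj_monoid p" "f1 \<cdot> m1 \<sqsubseteq> x" "x \<sqsubseteq> e"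
      and y: "f2 \<in> F" "m2 \<in> conj_monoid p" "f2 \<cdot> m2 \<sqsubseteq> y" "y \<sqsubseteq> e"
      by (metis adjoin_filterE)
    \<comment> \<open>move \<open>f2\<close> to the left of \<open>m1\<close> at the price of conjugating it\<close>
    have "f1 \<cdot> rho m1 f2 \<cdot> (m1 \<cdot> m2) \<sqsubseteq> f1 \<cdot> (m1 \<cdot> f2 \<cdot> m2)"
      using mult_left_mono[OF mult_right_mono[OF rho_mult_le]] by (simp add: assoc)
    also have "\<dots> \<sqsubseteq> x \<cdot> y"
      using mult_mono[OF x(3) y(3)] by (simp add: assoc)
    finally have "f1 \<cdot> rho m1 f2 \<cdot> (m1 \<cdot> m2) \<sqsubseteq> x \<cdot> y" .
    moreover have "f1 \<cdot> rho m1 f2 \<in> F"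
      using x(1) y(1) Fmult Fconj by blast
    moreover have "m1 \<cdot> m2 \<in> conj_monoid p"
      using x(2) y(2) by (rule conj_monoid_mult)
    moreover have "x \<cdot> y \<sqsubseteq> e"
      using x(4) y(4) by (rule mult_le_unit)
    ultimately show "x \<cdot> y \<in> adjoin_filter F p"
      by (intro adjoin_filterI)
  next
    fix x u assume "x \<in> adjoin_filter F p"
    then obtain f m where fm: "f \<in> F" "m \<in> conj_monoid p" "f \<cdot> m \<sqsubseteq> x"
      by (elim adjoin_filterE)
    obtain m' where m': "m' \<in> conj_monoid p" "m' \<sqsubseteq> lam u m"
      using conj_monoid_lam fm(2) by blast
    obtain m'' where m'': "m'' \<in> conj_monoid p" "m'' \<sqsubseteq> rho u m"
      using conj_monoid_rho fm(2) by blast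
    have "lam u f \<cdot> m' \<sqsubseteq> lam u f \<cdot> lam u m"
      using m'(2) by (rule mult_left_mono)
    also have "\<dots> \<sqsubseteq> lam u (f \<cdot> m)"
      by (rule lam_mult_le)
    also have "\<dots> \<sqsubseteq> lam u x"
      using fm(3) by (rule lam_mono)
    finally have "lam u f \<cdot> m' \<sqsubseteq> lam u x" .
    have "rho u f \<cdot> m'' \<sqsubseteq> rho u f \<cdot> rho u m"
      using m''(2) by (rule mult_left_mono)
    also have "\<dots> \<sqsubseteq> rho u (f \<cdot> m)"
      by (rule rho_mult_le_rho)
    also have "\<dots> \<sqsubseteq> rho u x"
      using fm(3) by (rule rho_mono)
    finally have "rho u f \<cdot> m'' \<sqsubseteq> rho u x" .
    show "lam u x \<in> adjoin_filter F p"
      using lam_le_unit Fconj(1)[OF fm(1)] m'(1) \<open>lam u f \<cdot> m' \<sqsubseteq> lam u x\<close> by (rule adjoin_filterI)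
    show "rho u x \<in> adjoin_filter F p"
      using rho_le_unit Fconj(2)[OF fm(1)] m''(1) \<open>rho u f \<cdot> m'' \<sqsubseteq> rho u x\<close> by (rule adjoin_filterI)
  qed (auto elim: adjoin_filterE)
qed

definition le_mod :: "'a set \<Rightarrow> 'a \<Rightarrow> 'a \<Rightarrow> bool" where
  "le_mod F b c \<longleftrightarrow> (\<exists>f\<in>F. b \<cdot> f \<sqsubseteq> c)"

lemma le_mod_if_le: "normal_filter F \<Longrightarrow> b \<sqsubseteq> c \<Longrightarrow> le_mod F b c"
  unfolding le_mod_def normal_filter_def by (metis right_unit)

definition prime_filter :: "'a set \<Rightarrow> bool" where
  "prime_filter F \<longleftrightarrow> normal_filter F \<and> (\<forall>b c. le_mod F b c \<or> le_mod F c b)"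

lemma totally_preordered_monoid_le_mod:
  assumes "prime_filter F"
  shows "totally_preordered_monoid (le_mod F) (\<cdot>) e"
proof
  have F: "normal_filter F" and total: "\<And>b c. le_mod F b c \<or> le_mod F c b"
    using assms unfolding prime_filter_def by blast+
  then have Fmult: "\<And>x y. x \<in> F \<Longrightarrow> y \<in> F \<Longrightarrow> x \<cdot> y \<in> F"
    and Flam: "\<And>x u. x \<in> F \<Longrightarrow> lam u x \<in> F"
    unfolding normal_filter_def by blast+
  show "le_mod F x x" for x
    using F le_mod_if_le by blast
  show "le_mod F x z" if xy: "le_mod F x y" and yz: "le_mod F y z" for x y z
  proof -
    obtain f g where "f \<in> F" "x \<cdot> f \<sqsubseteq> y" "g \<in> F" "y \<cdot> g \<sqsubseteq> z"
      using xy yz unfolding le_mod_def by blast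
    then have "x \<cdot> (f \<cdot> g) \<sqsubseteq> z"
      using mult_right_mono[of "x \<cdot> f" y g] lat.order.trans by (simp add: assoc)
    then show ?thesis
      unfolding le_mod_def using Fmult \<open>f \<in> F\<close> \<open>g \<in> F\<close> by blast
  qed
  show "le_mod F x y \<or> le_mod F y x" for x y
    by (rule total)
  show "le_mod F (z \<cdot> x) (z \<cdot> y)" if "le_mod F x y" for x y z
    using that mult_left_mono[of "x \<cdot> _" y z] unfolding le_mod_def by (auto simp: assoc)
  show "le_mod F (x \<cdot> z) (y \<cdot> z)" if xy: "le_mod F x y" for x y z
  proof -
    obtain f where "f \<in> F" "x \<cdot> f \<sqsubseteq> y"
      using xy unfolding le_mod_def by blast
    \<comment> \<open>\<open>f\<close> passes \<open>z\<close> as its conjugate \<open>lam z f\<close>\<close>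
    have "x \<cdot> z \<cdot> lam z f \<sqsubseteq> x \<cdot> f \<cdot> z"
      using mult_left_mono[OF mult_lam_le, of x] by (simp add: assoc)
    also have "\<dots> \<sqsubseteq> y \<cdot> z"
      using \<open>x \<cdot> f \<sqsubseteq> y\<close> by (rule mult_right_mono)
    finally show ?thesis
      unfolding le_mod_def using Flam \<open>f \<in> F\<close> by blast
  qed
qed (simp_all add: assoc)

end

locale hpsul = residuated_lattice +
  assumes join_conj_residuals: "lam u (ldiv (x \<squnion> y) x) \<squnion> rho v (ldiv (x \<squnion> y) y) = e"
begin

lemma join_unit_le: "a \<squnion> b = e \<Longrightarrow> a \<sqsubseteq> e" "a \<squnion> b = e \<Longrightarrow> b \<sqsubseteq> e"
  by (metis lat.sup_ge1 lat.sup_ge2)+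

lemma join_unit_conj: "a \<squnion> b = e \<Longrightarrow> lam u a \<squnion> rho v b = e"
  using join_conj_residuals[of u a b v] by simp

lemma join_unit_lam_right:
  assumes "a \<squnion> b = e"
  shows "a \<squnion> lam u b = e"
proof -
  have "lam u b \<squnion> rho e a = e"
    using assms by (intro join_unit_conj) (simp add: lat.sup_commute)
  moreover have "rho e a = a"
    using join_unit_le(1)[OF assms] by (simp add: lat.inf_absorb1)
  ultimately show ?thesis
    by (simp add: lat.sup_commute)
qed

lemma join_unit_rho_right:
  assumes "a \<squnion> b = e"
  shows "a \<squnion> rho u b = e"
proof -
  have "lam e a \<squnion> rho u b = e"
    using assms by (rule join_unit_conj)
  moreover have "lam e a = a"
    using join_unit_le(1)[OF assms] by (simp add: lat.inf_absorb1)
  ultimately show ?thesis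
    by simp
qed

lemma join_unit_conj_closure: "y \<in> conj_closure b \<Longrightarrow> a \<squnion> b = e \<Longrightarrow> a \<squnion> y = e"
proof (induction y rule: conj_closure.induct)
  case (lam x u)
  show ?case by (rule join_unit_lam_right[OF lam.IH[OF lam.prems]])
next
  case (rho x u)
  show ?case by (rule join_unit_rho_right[OF rho.IH[OF rho.prems]])
qed

lemma join_unit_mult:
  assumes ab: "a \<squnion> b = e" and ac: "a \<squnion> c = e"
  shows "a \<squnion> b \<cdot> c = e"
proof (rule lat.order.antisym)
  have le: "a \<sqsubseteq> e" "b \<sqsubseteq> e" "c \<sqsubseteq> e"
    using ab ac join_unit_le by blast+
  then show "a \<squnion> b \<cdot> c \<sqsubseteq> e"
    by (simp add: mult_le_unit)
  have "a \<cdot> (a \<squnion> c) \<sqsubseteq> a"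
    using mult_left_mono[OF le(3), of a] ac by simp
  then have "a \<cdot> (a \<squnion> c) \<sqsubseteq> a \<squnion> b \<cdot> c"
    using lat.sup_ge1 by (rule lat.order.trans)
  moreover have "b \<cdot> (a \<squnion> c) \<sqsubseteq> a \<squnion> b \<cdot> c"
  proof -
    have "b \<cdot> a \<sqsubseteq> a"
      using mult_right_mono[OF le(2), of a] by simp
    have "b \<cdot> (a \<squnion> c) \<sqsubseteq> b \<cdot> a \<squnion> b \<cdot> c"
      by (rule mult_sup_le)
    also have "\<dots> \<sqsubseteq> a \<squnion> b \<cdot> c"
      using \<open>b \<cdot> a \<sqsubseteq> a\<close> lat.order.refl by (rule lat.sup_mono)
    finally show ?thesis .
  qed
  ultimately have "a \<cdot> (a \<squnion> c) \<squnion> b \<cdot> (a \<squnion> c) \<sqsubseteq> a \<squnion> b \<cdot> c"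
    by (rule lat.le_supI)
  with sup_mult_le have "(a \<squnion> b) \<cdot> (a \<squnion> c) \<sqsubseteq> a \<squnion> b \<cdot> c"
    by (rule lat.order.trans)
  then show "e \<sqsubseteq> a \<squnion> b \<cdot> c"
    using ab ac by simp
qed

lemma join_unit_conj_monoid_right: "m \<in> conj_monoid b \<Longrightarrow> a \<squnion> b = e \<Longrightarrow> a \<squnion> m = e"
proof (induction m rule: conj_monoid.induct)
  case unit
  then show ?case using join_unit_le lat.sup_absorb2 by blast
next
  case (mult y m)
  then show ?case using join_unit_conj_closure join_unit_mult by blast
qed

lemma join_unit_conj_monoid:
  "m \<in> conj_monoid a \<Longrightarrow> n \<in> conj_monoid b \<Longrightarrow> a \<squnion> b = e \<Longrightarrow> m \<squnion> n = e"
  by (metis join_unit_conj_monoid_right lat.sup_commute)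

lemma adjoin_filter_Int_subset:
  assumes F: "normal_filter F" and pq: "p \<squnion> q = e"
  shows "adjoin_filter F p \<inter> adjoin_filter F q \<subseteq> F"
proof
  fix d assume "d \<in> adjoin_filter F p \<inter> adjoin_filter F q"
  then obtain f1 m1 f2 m2 where "d \<sqsubseteq> e"
    and 1: "f1 \<in> F" "m1 \<in> conj_monoid p" "f1 \<cdot> m1 \<sqsubseteq> d"
    and 2: "f2 \<in> F" "m2 \<in> conj_monoid q" "f2 \<cdot> m2 \<sqsubseteq> d"
    unfolding adjoin_filter_def by auto
  have Fle: "\<And>x. x \<in> F \<Longrightarrow> x \<sqsubseteq> e" and Fup: "\<And>x y. x \<in> F \<Longrightarrow> x \<sqsubseteq> y \<Longrightarrow> y \<sqsubseteq> e \<Longrightarrow> y \<in> F"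
    and Fmult: "\<And>x y. x \<in> F \<Longrightarrow> y \<in> F \<Longrightarrow> x \<cdot> y \<in> F"
    using F unfolding normal_filter_def by blast+
  have "f1 \<cdot> f2 = f1 \<cdot> f2 \<cdot> (m1 \<squnion> m2)"
    using join_unit_conj_monoid[OF 1(2) 2(2) pq] by simp
  also have "\<dots> \<sqsubseteq> f1 \<cdot> f2 \<cdot> m1 \<squnion> f1 \<cdot> f2 \<cdot> m2"
    by (rule mult_sup_le)
  also have "\<dots> \<sqsubseteq> d"
  proof (rule lat.le_supI)
    have "f2 \<cdot> m1 \<sqsubseteq> m1"
      using mult_right_mono[OF Fle[OF 2(1)], of m1] by simp
    then have "f1 \<cdot> f2 \<cdot> m1 \<sqsubseteq> f1 \<cdot> m1"
      using mult_left_mono[of "f2 \<cdot> m1" m1 f1] by (simp add: assoc)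
    then show "f1 \<cdot> f2 \<cdot> m1 \<sqsubseteq> d" using 1(3) by (rule lat.order.trans)
    have "f1 \<cdot> f2 \<cdot> m2 \<sqsubseteq> f2 \<cdot> m2"
      using mult_right_mono[OF Fle[OF 1(1)], of "f2 \<cdot> m2"] by (simp add: assoc)
    then show "f1 \<cdot> f2 \<cdot> m2 \<sqsubseteq> d" using 2(3) by (rule lat.order.trans)
  qed
  finally show "d \<in> F"
    using Fup Fmult 1(1) 2(1) \<open>d \<sqsubseteq> e\<close> by blast
qed

lemma le_mod_total_if_maximal:
  assumes F: "normal_filter F" and "d \<notin> F" and "d \<sqsubseteq> e"
    and maximal: "\<And>G. normal_filter G \<Longrightarrow> d \<notin> G \<Longrightarrow> F \<subseteq> G \<Longrightarrow> G = F"
  shows "le_mod F b c \<or> le_mod F c b"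
proof (rule ccontr)
  assume incomparable: "\<not> (le_mod F b c \<or> le_mod F c b)"
  define p where "p = ldiv (b \<squnion> c) b \<sqinter> e"
  define q where "q = ldiv (b \<squnion> c) c \<sqinter> e"
  have pq: "p \<squnion> q = e"
    using join_conj_residuals[of e b c e] by (simp add: p_def q_def)
  have "c \<cdot> p \<sqsubseteq> (b \<squnion> c) \<cdot> ldiv (b \<squnion> c) b"
    unfolding p_def using lat.sup_ge2 lat.inf_le1 by (rule mult_mono)
  then have "c \<cdot> p \<sqsubseteq> b"
    using mult_ldiv_le by (rule lat.order.trans)
  then have "p \<notin> F"
    using incomparable unfolding le_mod_def by blast
  have "b \<cdot> q \<sqsubseteq> (b \<squnion> c) \<cdot> ldiv (b \<squnion> c) c"
    unfolding q_def using lat.sup_ge1 lat.inf_le1 by (rule mult_mono)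
  then have "b \<cdot> q \<sqsubseteq> c"
    using mult_ldiv_le by (rule lat.order.trans)
  then have "q \<notin> F"
    using incomparable unfolding le_mod_def by blast
  have "d \<in> adjoin_filter F r" if "r \<sqsubseteq> e" and "r \<notin> F" for r
  proof (rule ccontr)
    assume "d \<notin> adjoin_filter F r"
    then have "adjoin_filter F r = F"
      using maximal normal_filter_adjoin_filter[OF F] subset_adjoin_filter[OF F] by blast
    then show False
      using mem_adjoin_filter[OF F \<open>r \<sqsubseteq> e\<close>] \<open>r \<notin> F\<close> by simp
  qed
  then have "d \<in> adjoin_filter F p \<inter> adjoin_filter F q"
    using \<open>p \<notin> F\<close> \<open>q \<notin> F\<close> by (simp add: p_def q_def)
  then show False
    using adjoin_filter_Int_subset[OF F pq] \<open>d \<notin> F\<close> by blast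
qed

end

locale finite_hpsul = hpsul +
  assumes finite_carrier: "finite (UNIV :: 'a set)"
begin

lemma exists_prime_filter_not_le_mod:
  assumes "\<not> a \<sqsubseteq> e"
  obtains F where "prime_filter F" and "\<not> le_mod F a e"
proof -
  \<comment> \<open>a normal filter contains \<open>d\<close> iff it puts \<open>a\<close> below \<open>e\<close>\<close>
  define d where "d = ldiv a e \<sqinter> e"
  have "d \<sqsubseteq> e"
    unfolding d_def by simp
  have "normal_filter {e}"
    unfolding normal_filter_def by (auto intro: lat.order.antisym)
  moreover have "d \<notin> {e}"
  proof
    assume "d \<in> {e}"
    then have "e \<sqsubseteq> ldiv a e"
      using lat.inf_le1 unfolding d_def by (metis singletonD)
    then show False
      using assms le_ldiv_iff[of a e e] by simp
  qed
  moreover have "finite {G. normal_filter G \<and> d \<notin> G}"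
    using finite_carrier Finite_Set.finite_set finite_subset[OF subset_UNIV] by blast
  ultimately obtain F where F: "normal_filter F" "d \<notin> F"
    and maximal: "\<And>G. normal_filter G \<Longrightarrow> d \<notin> G \<Longrightarrow> F \<subseteq> G \<Longrightarrow> G = F"
    using finite_has_maximal[of "{G. normal_filter G \<and> d \<notin> G}"] by blast
  have "prime_filter F"
    unfolding prime_filter_def using le_mod_total_if_maximal[OF F \<open>d \<sqsubseteq> e\<close> maximal] F by blast
  moreover have "\<not> le_mod F a e"
  proof
    assume "le_mod F a e"
    then obtain f where "f \<in> F" "a \<cdot> f \<sqsubseteq> e"
      unfolding le_mod_def by blast
    then have "f \<sqsubseteq> d"
      using F(1) unfolding d_def normal_filter_def by (simp add: le_ldiv_iff)
    then have "d \<in> F"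
      using F(1) \<open>f \<in> F\<close> \<open>d \<sqsubseteq> e\<close> unfolding normal_filter_def by blast
    with F(2) show False ..
  qed
  ultimately show ?thesis by (rule that)
qed

lemma le_unit_iff_le_mod: "a \<sqsubseteq> e \<longleftrightarrow> (\<forall>F. prime_filter F \<longrightarrow> le_mod F a e)"
proof
  show "a \<sqsubseteq> e \<Longrightarrow> \<forall>F. prime_filter F \<longrightarrow> le_mod F a e"
    using le_mod_if_le unfolding prime_filter_def by blast
  show "\<forall>F. prime_filter F \<longrightarrow> le_mod F a e \<Longrightarrow> a \<sqsubseteq> e"
    using exists_prime_filter_not_le_mod by blast
qed

lemma finite_totally_preordered_monoid_le_mod:
  "prime_filter F \<Longrightarrow> finite_totally_preordered_monoid (le_mod F) (\<cdot>) e"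
  by (intro_locales) (simp_all add: totally_preordered_monoid_le_mod
      finite_totally_preordered_monoid_axioms_def finite_carrier)

lemma ldiv_unit_square: "ldiv x e = ldiv (x \<cdot> x) e"
proof -
  have "le_mod F (x \<cdot> y) e \<longleftrightarrow> le_mod F (x \<cdot> (x \<cdot> y)) e" if "prime_filter F" for F y
  proof -
    interpret finite_totally_preordered_monoid "le_mod F" "(\<cdot>)" e
      using that by (rule finite_totally_preordered_monoid_le_mod)
    show ?thesis
      using mult_square_le_unit mult_le_unit_of_square by blast
  qed
  then have "x \<cdot> y \<sqsubseteq> e \<longleftrightarrow> x \<cdot> (x \<cdot> y) \<sqsubseteq> e" for y
    unfolding le_unit_iff_le_mod by blast
  then have "y \<sqsubseteq> ldiv x e \<longleftrightarrow> y \<sqsubseteq> ldiv (x \<cdot> x) e" for y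
    by (simp add: assoc flip: le_ldiv_iff)
  then show ?thesis
    by (meson lat.order.antisym lat.order.refl)
qed

end

theorem lemma2p6:
  fixes meet join mult ldiv rdiv :: "'a \<Rightarrow> 'a \<Rightarrow> 'a" and e f bt tp :: 'a
  shows "(finite (UNIV :: 'a set) \<and> is_chain meet \<and> HpsUL_star meet join mult ldiv rdiv e f bt tp
            \<longrightarrow> is_chain meet \<and> HpsUL_star_omega meet join mult ldiv rdiv e f bt tp)
       \<and> (finite (UNIV :: 'a set) \<and> HpsUL_star meet join mult ldiv rdiv e f bt tp
            \<longrightarrow> HpsUL_star_omega meet join mult ldiv rdiv e f bt tp)"
proof -
  have "HpsUL_star_omega meet join mult ldiv rdiv e f bt tp"
    if "finite (UNIV :: 'a set)" and star: "HpsUL_star meet join mult ldiv rdiv e f bt tp"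
  proof -
    interpret finite_hpsul meet join mult ldiv rdiv e bt tp
      using that unfolding HpsUL_star_def HpsUL_def by unfold_locales auto
    show ?thesis
      using star ldiv_unit_square unfolding HpsUL_star_omega_def by blast
  qed
  then show ?thesis by blast
qed

end
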